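(* Let $R>0$, let $\mathcal C$ be a finite point configuration in $\overline{C_R}$ and $\mu$ a bounded measurable function on $C_R$. For another finite configuration $\mathcal C'$ in $\overline{C_R}$ and bounded measurable $\mu'$ on $C_R$, set $$\tilde E_\eta=\nabla g_\eta*(\mathcal C-\mathcal C')-\nabla g*\big((\mu-\mu')\mathbf 1_{C_R}\delta_{\mathbb R^d}\big),\qquad g_\eta=\min(g,g(\eta)).$$ Then for every $\eta\in(0,1)$, $\int_{C_R\times[-R,R]^k}|y|^\gamma|\tilde E_\eta|^2\to0$ as $(\mathcal C',\mu')\to(\mathcal C,\mu)$ in $\mathcal X(\overline{C_R})\times L^\infty(C_R)$.
   Context: Fix $d\ge1$. Kernel cases: (L1) $d=1$, $g(x)=-\log|x|$; (L2) $d=2$, $g(x)=-\log|x|$; (R) $g(x)=|x|^{-s}$, $\max(0,d-2)\le s<d$; $s=0$ in (L1),(L2). $(k,\gamma)$: $k=1,\gamma=s-d+1$ in (R) with $s>\max(0,d-2)$; $k=1,\gamma=0$ in (L1); $k=0,\gamma=0$ in (L2) and in (R) with $d\ge3,s=d-2$. Points of $\mathbb R^{d+k}$: $X=(x,y)$; $\mathbb R^d\equiv\mathbb R^d\times\{0\}$; $g$ extended to $\mathbb R^{d+k}$ by $g(X)=|X|^{-s}$ (resp. $-\log|X|$), $g(\eta)$ its value at $|X|=\eta$; convolutions are taken in $\mathbb R^{d+k}$. For a measure or function $\mu$ on $\mathbb R^d$, $\mu\delta_{\mathbb R^d}$ is the measure $\varphi\mapsto\int\varphi(x,0)d\mu(x)$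 on $\mathbb R^{d+k}$. $C_R=[-R/2,R/2]^d$. A point configuration is a sum of Dirac masses with positive integer weights; $\mathcal X(\overline{C_R})$ is the space of such configurations in $\overline{C_R}$ with the topology of weak convergence of measures. *)

theory Defs
  imports "HOL-Analysis.Analysis"
begin

text \<open>Kernel cases.  The flag lg selects the logarithmic kernel (cases L1, L2, with s = 0);
  otherwise the Riesz kernel with exponent s (case R).  d is the dimension.\<close>

definition admissible :: "nat \<Rightarrow> bool \<Rightarrow> real \<Rightarrow> bool" where
  "admissible d lg s \<longleftrightarrow>
     (if lg then (d = 1 \<or> d = 2) \<and> s = 0
      else (max 0 (real d - 2) < s \<and> s < real d) \<or> (d \<ge> 3 \<and> s = real d - 2))"

definition kdim :: "nat \<Rightarrow> bool \<Rightarrow> real \<Rightarrow> nat" where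
  "kdim d lg s = (if lg then (if d = 1 then 1 else 0)
                  else (if max 0 (real d - 2) < s then 1 else 0))"

definition gam :: "nat \<Rightarrow> bool \<Rightarrow> real \<Rightarrow> real" where
  "gam d lg s = (if lg then 0 else if max 0 (real d - 2) < s then s - real d + 1 else 0)"

text \<open>Radial profile of the kernel: g(eta) is the value of g at |X| = eta.\<close>
definition gprof :: "bool \<Rightarrow> real \<Rightarrow> real \<Rightarrow> real" where
  "gprof lg s r = (if lg then - ln r else r powr (- s))"

definition gker :: "bool \<Rightarrow> real \<Rightarrow> 'b::real_normed_vector \<Rightarrow> real" where
  "gker lg s X = gprof lg s (norm X)"

definition gtrunc :: "bool \<Rightarrow> real \<Rightarrow> real \<Rightarrow> 'b::real_normed_vector \<Rightarrow> real" where
  "gtrunc lg s \<eta> X = min (gker lg s X) (gprof lg s \<eta>)"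

text \<open>Gradient (0 at points of non-differentiability, a null set here).\<close>
definition vgrad :: "('b::real_inner \<Rightarrow> real) \<Rightarrow> 'b \<Rightarrow> 'b" where
  "vgrad f X = (if \<exists>D. GDERIV f X :> D then (SOME D. GDERIV f X :> D) else 0)"

definition cube :: "real \<Rightarrow> 'a::euclidean_space set" where
  "cube R = cbox (- (R / 2) *\<^sub>R One) ((R / 2) *\<^sub>R One)"

text \<open>The field tilde E_eta on the ambient space 'b (= R^(d+k)); e embeds R^d as R^d x {0}.
  Point configurations are finite multisets of points.\<close>
definition Efield :: "bool \<Rightarrow> real \<Rightarrow> real \<Rightarrow> real \<Rightarrow> ('a::euclidean_space \<Rightarrow> 'b::euclidean_space)
    \<Rightarrow> 'a multiset \<Rightarrow> 'a multiset \<Rightarrow> ('a \<Rightarrow> real) \<Rightarrow> ('a \<Rightarrow> real) \<Rightarrow> 'b \<Rightarrow> 'b" where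
  "Efield lg s R \<eta> e C C' \<mu> \<mu>' X =
     (\<Sum>p\<in>#C. vgrad (gtrunc lg s \<eta>) (X - e p))
     - (\<Sum>p\<in>#C'. vgrad (gtrunc lg s \<eta>) (X - e p))
     - (LINT x : cube R | lebesgue. (\<mu> x - \<mu>' x) *\<^sub>R vgrad (gker lg s) (X - e x))"

definition energy :: "bool \<Rightarrow> real \<Rightarrow> real \<Rightarrow> real
    \<Rightarrow> 'a::euclidean_space multiset \<Rightarrow> 'a multiset \<Rightarrow> ('a \<Rightarrow> real) \<Rightarrow> ('a \<Rightarrow> real) \<Rightarrow> ennreal" where
  "energy lg s R \<eta> C C' \<mu> \<mu>' =
     (if kdim DIM('a) lg s = 1 then
        (\<integral>\<^sup>+ X. indicator (cube R \<times> {-R..R}) X *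
            ennreal (\<bar>snd X\<bar> powr gam DIM('a) lg s
                     * (norm (Efield lg s R \<eta> (\<lambda>x. (x, 0::real)) C C' \<mu> \<mu>' X))\<^sup>2) \<partial>lebesgue)
      else
        (\<integral>\<^sup>+ X. indicator (cube R) X *
            ennreal ((norm (Efield lg s R \<eta> (\<lambda>x. x) C C' \<mu> \<mu>' X))\<^sup>2) \<partial>lebesgue))"

end

theory Submission
  imports Defs
begin

text \<open>For fixed \<open>\<eta>\<close> the field splits into a point part and a background part. The truncated point
  fields \<open>\<nabla>g\<^sub>\<eta>(X - p)\<close> are bounded by \<open>|\<nabla>g(\<eta>)|\<close> and continuous off the spheres \<open>|X - p| = \<eta>\<close>;
  since weakly converging finite configurations eventually have the same number of points, each
  close to a point of the limit, the point part converges to 0 almost everywhere, and dominated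
  convergence on the bounded domain disposes of it. The background part is at most
  \<open>\<parallel>\<mu> - \<mu>'\<parallel>\<^sub>\<infinity> \<integral>\<^sub>C\<^sub>R |\<nabla>g(X - x)| dx\<close>, and the last integral is square integrable against
  \<open>|y|\<^sup>\<gamma>\<close>: dominating \<open>|X - x|^-(s+1)\<close> by a product of one-dimensional singularities
  \<open>|x\<^sub>b - X\<^sub>b|^-p\<close> with \<open>p < 1\<close> (times \<open>|y|^-q\<close> in the extended case) lets Tonelli factorise it.\<close>

section \<open>The kernel and its truncation\<close>

definition kernel_deriv :: "bool \<Rightarrow> real \<Rightarrow> real \<Rightarrow> real" where
  "kernel_deriv lg s r = (if lg then - (1 / r) else - s * r powr (- s - 1))"

definition kernel_grad :: "bool \<Rightarrow> real \<Rightarrow> 'b::real_inner \<Rightarrow> 'b" where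
  "kernel_grad lg s Z = (kernel_deriv lg s (norm Z) / norm Z) *\<^sub>R Z"

definition kernel_grad_const :: "bool \<Rightarrow> real \<Rightarrow> real" where
  "kernel_grad_const lg s = (if lg then 1 else s)"

definition decreasing_kernel :: "bool \<Rightarrow> real \<Rightarrow> bool" where
  "decreasing_kernel lg s \<longleftrightarrow> (if lg then s = 0 else 0 < s)"

lemma decreasing_kernel_nonneg: "decreasing_kernel lg s \<Longrightarrow> 0 \<le> s"
  by (auto simp: decreasing_kernel_def split: if_splits)

lemma kernel_grad_const_nonneg: "decreasing_kernel lg s \<Longrightarrow> 0 \<le> kernel_grad_const lg s"
  by (auto simp: decreasing_kernel_def kernel_grad_const_def)

lemma gprof_antimono:
  assumes "decreasing_kernel lg s" "0 < a" "a \<le> b"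
  shows "gprof lg s b \<le> gprof lg s a"
  using assms by (auto simp: decreasing_kernel_def gprof_def intro!: powr_mono2' split: if_splits)

lemma gprof_has_real_derivative:
  assumes "0 < r"
  shows "(gprof lg s has_real_derivative kernel_deriv lg s r) (at r)"
proof (cases lg)
  case True
  have "((\<lambda>r. - ln r) has_real_derivative - (1 / r)) (at r)"
    using assms by (auto intro!: derivative_eq_intros)
  then show ?thesis using True by (simp add: gprof_def[abs_def] kernel_deriv_def)
next
  case False
  have "((\<lambda>r. r powr (- s)) has_real_derivative - s * r powr (- s - 1)) (at r)"
    using assms by (auto intro!: derivative_eq_intros simp: field_simps)
  then show ?thesis using False by (simp add: gprof_def[abs_def] kernel_deriv_def)
qed

lemma GDERIV_gker:
  fixes Z :: "'b::real_inner"
  assumes "Z \<noteq> 0"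
  shows "GDERIV (gker lg s) Z :> kernel_grad lg s Z"
proof -
  have "GDERIV (\<lambda>x. gprof lg s (norm x)) Z :> kernel_deriv lg s (norm Z) *\<^sub>R sgn Z"
    by (rule GDERIV_DERIV_compose[OF GDERIV_norm[OF assms] gprof_has_real_derivative])
       (use assms in simp)
  then show ?thesis
    by (simp add: gker_def[abs_def] kernel_grad_def sgn_div_norm divide_inverse_commute mult.commute)
qed

lemma vgrad_eqI:
  fixes f :: "'b::real_inner \<Rightarrow> real"
  assumes "GDERIV f X :> D"
  shows "vgrad f X = D"
proof -
  have unique: "D' = D" if "GDERIV f X :> D'" for D'
  proof -
    have "(\<lambda>h. inner h D') = (\<lambda>h. inner h D)"
      using has_derivative_unique that assms unfolding gderiv_def by blast
    then have "inner (D' - D) D' = inner (D' - D) D" by metis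
    then have "inner (D' - D) (D' - D) = 0" by (simp add: inner_diff_right)
    then show ?thesis by simp
  qed
  have "GDERIV f X :> (SOME D. GDERIV f X :> D)" using assms by (rule someI)
  then show ?thesis unfolding vgrad_def using assms unique by auto
qed

lemma vgrad_gker:
  fixes Z :: "'b::real_inner"
  assumes "Z \<noteq> 0"
  shows "vgrad (gker lg s) Z = kernel_grad lg s Z"
  using vgrad_eqI[OF GDERIV_gker[OF assms]] .

lemma norm_kernel_grad:
  fixes Z :: "'b::real_inner"
  assumes "decreasing_kernel lg s" "Z \<noteq> 0"
  shows "norm (kernel_grad lg s Z) = kernel_grad_const lg s * norm Z powr (- (s + 1))"
  using assms
  by (auto simp: decreasing_kernel_def kernel_grad_def kernel_deriv_def kernel_grad_const_def
      powr_minus_divide powr_add powr_diff abs_mult field_simps split: if_splits)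

lemma borel_measurable_kernel_grad [measurable]:
  "(kernel_grad lg s :: 'b::euclidean_space \<Rightarrow> 'b) \<in> borel_measurable borel"
  unfolding kernel_grad_def[abs_def] kernel_deriv_def by (cases lg) measurable

lemma borel_measurable_vgrad_gker [measurable]:
  "(vgrad (gker lg s) :: 'b::euclidean_space \<Rightarrow> 'b) \<in> borel_measurable borel"
  by (rule measurable_discrete_difference[where X="{0}", OF borel_measurable_kernel_grad])
     (auto simp: vgrad_gker)

definition trunc_grad :: "bool \<Rightarrow> real \<Rightarrow> real \<Rightarrow> 'b::real_inner \<Rightarrow> 'b" where
  "trunc_grad lg s \<eta> Z = (if \<eta> < norm Z then kernel_grad lg s Z else 0)"

lemma vgrad_gtrunc:
  fixes Z :: "'b::real_inner"
  assumes dk: "decreasing_kernel lg s" and \<eta>: "0 < \<eta>" and Z: "Z \<noteq> 0" "norm Z \<noteq> \<eta>"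
  shows "vgrad (gtrunc lg s \<eta>) Z = trunc_grad lg s \<eta> Z"
proof (cases "\<eta> < norm Z")
  case True
  have "(gker lg s has_derivative (\<lambda>h. inner h (kernel_grad lg s Z))) (at Z)"
    using GDERIV_gker[OF Z(1)] unfolding gderiv_def .
  then have "(gtrunc lg s \<eta> has_derivative (\<lambda>h. inner h (kernel_grad lg s Z))) (at Z)"
  proof (rule has_derivative_transform_within_open)
    show "open {W::'b. \<eta> < norm W}" by (intro open_Collect_less continuous_intros)
    fix W :: 'b assume "W \<in> {W. \<eta> < norm W}"
    then show "gker lg s W = gtrunc lg s \<eta> W"
      using gprof_antimono[OF dk \<eta>, of "norm W"] by (auto simp: gtrunc_def gker_def)
  qed (use True in simp)
  then have "vgrad (gtrunc lg s \<eta>) Z = kernel_grad lg s Z"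
    by (intro vgrad_eqI) (simp add: gderiv_def)
  with True show ?thesis by (simp add: trunc_grad_def)
next
  case False
  then have inside: "norm Z < \<eta>" using Z(2) by simp
  have "((\<lambda>_. gprof lg s \<eta>) has_derivative (\<lambda>h. inner h 0)) (at Z)"
    by (simp add: has_derivative_const)
  then have "(gtrunc lg s \<eta> has_derivative (\<lambda>h. inner h 0)) (at Z)"
  proof (rule has_derivative_transform_within_open)
    show "open {W::'b. 0 < norm W \<and> norm W < \<eta>}"
      by (intro open_Collect_conj open_Collect_less continuous_intros)
    fix W :: 'b assume "W \<in> {W. 0 < norm W \<and> norm W < \<eta>}"
    then show "gprof lg s \<eta> = gtrunc lg s \<eta> W"
      using gprof_antimono[OF dk, of "norm W" \<eta>] by (auto simp: gtrunc_def gker_def)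
  qed (use Z(1) inside in simp)
  then have "vgrad (gtrunc lg s \<eta>) Z = 0"
    by (intro vgrad_eqI) (simp add: gderiv_def)
  with False show ?thesis by (simp add: trunc_grad_def)
qed

lemma norm_trunc_grad_le:
  assumes dk: "decreasing_kernel lg s" and \<eta>: "0 < \<eta>"
  shows "norm (trunc_grad lg s \<eta> Z) \<le> kernel_grad_const lg s * \<eta> powr (- (s + 1))"
proof (cases "\<eta> < norm Z")
  case True
  then have "Z \<noteq> 0" using \<eta> by auto
  with True have "norm (trunc_grad lg s \<eta> Z) = kernel_grad_const lg s * norm Z powr (- (s + 1))"
    by (simp add: trunc_grad_def norm_kernel_grad[OF dk])
  also have "\<dots> \<le> kernel_grad_const lg s * \<eta> powr (- (s + 1))"
    using True \<eta> decreasing_kernel_nonneg[OF dk] kernel_grad_const_nonneg[OF dk]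
    by (intro mult_left_mono powr_mono2') auto
  finally show ?thesis .
qed (use kernel_grad_const_nonneg[OF dk] in \<open>simp add: trunc_grad_def\<close>)

lemma borel_measurable_trunc_grad [measurable]:
  "(trunc_grad lg s \<eta> :: 'b::euclidean_space \<Rightarrow> 'b) \<in> borel_measurable borel"
  unfolding trunc_grad_def[abs_def] by measurable

lemma isCont_trunc_grad:
  fixes Z :: "'b::real_inner"
  assumes "norm Z \<noteq> \<eta>" "0 < \<eta>"
  shows "isCont (trunc_grad lg s \<eta>) Z"
proof (cases "\<eta> < norm Z")
  case True
  have "isCont (kernel_grad lg s) Z"
    using True assms unfolding kernel_grad_def kernel_deriv_def
    by (cases lg) (auto intro!: continuous_intros simp: netlimit_at_vector)
  moreover have "eventually (\<lambda>W. kernel_grad lg s W = trunc_grad lg s \<eta> W) (nhds Z)"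
    unfolding trunc_grad_def using True
    by (intro eventually_nhds_in_open[of "{W. \<eta> < norm W}", THEN eventually_mono])
       (auto intro!: open_Collect_less continuous_intros)
  ultimately show ?thesis using isCont_cong by blast
next
  case False
  then have "norm Z < \<eta>" using assms by auto
  then have "eventually (\<lambda>W. 0 = trunc_grad lg s \<eta> W) (nhds Z)"
    unfolding trunc_grad_def
    by (intro eventually_nhds_in_open[of "{W. norm W < \<eta>}", THEN eventually_mono])
       (auto intro!: open_Collect_less continuous_intros)
  then show ?thesis using isCont_cong[of "\<lambda>_. 0"] by auto
qed

section \<open>Weak convergence of point configurations\<close>

lemma inner_sum_mset_left: "inner (\<Sum>p\<in>#M. f p) b = (\<Sum>p\<in>#M. inner (f p) b)"
  by (induction M) (simp_all add: inner_add_left)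

lemma norm_sum_mset_le: "norm (\<Sum>p\<in>#M. (f p :: 'c::real_normed_vector)) \<le> (\<Sum>p\<in>#M. norm (f p))"
  by (induction M) (auto intro: order_trans[OF norm_triangle_ineq])

lemma norm_sum_mset_le_size:
  fixes f :: "'a \<Rightarrow> 'c::real_normed_vector"
  assumes "\<And>p. p \<in># M \<Longrightarrow> norm (f p) \<le> B"
  shows "norm (\<Sum>p\<in>#M. f p) \<le> real (size M) * B"
proof -
  have "norm (\<Sum>p\<in>#M. f p) \<le> (\<Sum>p\<in>#M. norm (f p))" by (rule norm_sum_mset_le)
  also have "\<dots> \<le> (\<Sum>p\<in>#M. B)" by (rule sum_mset_mono) (rule assms)
  finally show ?thesis by simp
qed

lemma sum_mset_subtractf:
  "(\<Sum>p\<in>#M. (f p :: 'c::ab_group_add) - g p) = (\<Sum>p\<in>#M. f p) - (\<Sum>p\<in>#M. g p)"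
  by (induction M) (simp_all add: algebra_simps)

lemma member_le_sum_mset:
  fixes f :: "'a \<Rightarrow> 'c::ordered_comm_monoid_add"
  assumes "x \<in># M" "\<And>y. y \<in># M \<Longrightarrow> 0 \<le> f y"
  shows "f x \<le> (\<Sum>p\<in>#M. f p)"
proof -
  obtain M' where M: "M = add_mset x M'" using assms(1) by (metis multi_member_split)
  have "\<forall>y\<in>#M'. 0 \<le> f y" using assms(2) M by auto
  then have "0 \<le> (\<Sum>p\<in>#M'. f p)" by (induction M') (auto intro: add_nonneg_nonneg)
  then show ?thesis using M by (simp add: add_increasing2)
qed

definition mset_weak_conv :: "'a::topological_space set \<Rightarrow> (nat \<Rightarrow> 'a multiset) \<Rightarrow> 'a multiset \<Rightarrow> bool" where
  "mset_weak_conv K Cs C \<longleftrightarrow>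
     (\<forall>\<phi> :: 'a \<Rightarrow> real. continuous_on K \<phi> \<longrightarrow> (\<lambda>n. \<Sum>p\<in>#Cs n. \<phi> p) \<longlonglongrightarrow> (\<Sum>p\<in>#C. \<phi> p))"

lemma mset_weak_convD:
  fixes \<phi> :: "'a::topological_space \<Rightarrow> real"
  assumes "mset_weak_conv K Cs C" "continuous_on UNIV \<phi>"
  shows "(\<lambda>n. \<Sum>p\<in>#Cs n. \<phi> p) \<longlonglongrightarrow> (\<Sum>p\<in>#C. \<phi> p)"
  using assms(1) continuous_on_subset[OF assms(2) subset_UNIV] unfolding mset_weak_conv_def by blast

lemma mset_weak_conv_vector:
  fixes \<Phi> :: "'a::topological_space \<Rightarrow> 'c::euclidean_space"
  assumes "mset_weak_conv K Cs C" "continuous_on UNIV \<Phi>"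
  shows "(\<lambda>n. \<Sum>p\<in>#Cs n. \<Phi> p) \<longlonglongrightarrow> (\<Sum>p\<in>#C. \<Phi> p)"
proof -
  have rep: "(\<Sum>p\<in>#M. \<Phi> p) = (\<Sum>b\<in>Basis. (\<Sum>p\<in>#M. inner (\<Phi> p) b) *\<^sub>R b)" for M
    by (subst euclidean_representation[symmetric]) (simp add: inner_sum_mset_left)
  have "(\<lambda>n. \<Sum>b\<in>Basis. (\<Sum>p\<in>#Cs n. inner (\<Phi> p) b) *\<^sub>R b)
      \<longlonglongrightarrow> (\<Sum>b\<in>Basis. (\<Sum>p\<in>#C. inner (\<Phi> p) b) *\<^sub>R b)"
    using assms by (intro tendsto_intros mset_weak_convD continuous_intros)
  then show ?thesis by (simp add: rep)
qed

lemma mset_weak_conv_eventually_size: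
  assumes "mset_weak_conv K Cs C"
  shows "eventually (\<lambda>n. size (Cs n) = size C) sequentially"
proof -
  have "(\<lambda>n. real (size (Cs n))) \<longlonglongrightarrow> real (size C)"
    using mset_weak_convD[OF assms, of "\<lambda>_. 1"] by simp
  then have "eventually (\<lambda>n. dist (real (size (Cs n))) (real (size C)) < 1) sequentially"
    by (rule tendstoD) simp
  then show ?thesis
    by eventually_elim (auto simp: dist_real_def abs_less_iff)
qed

lemma mset_weak_conv_eventually_near:
  fixes C :: "'a::metric_space multiset"
  assumes weak: "mset_weak_conv K Cs C" and "C \<noteq> {#}" and \<delta>: "0 < \<delta>"
  shows "eventually (\<lambda>n. \<forall>p\<in>#Cs n. \<exists>q\<in>#C. dist p q < \<delta>) sequentially"
proof -
  define \<psi> where "\<psi> p = min 1 (infdist p (set_mset C) / \<delta>)" for p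
  have "(\<Sum>p\<in>#C. \<psi> p) = (\<Sum>p\<in>#C. 0)"
    by (intro arg_cong[where f=sum_mset] image_mset_cong) (simp add: \<psi>_def)
  moreover have "(\<lambda>n. \<Sum>p\<in>#Cs n. \<psi> p) \<longlonglongrightarrow> (\<Sum>p\<in>#C. \<psi> p)"
    unfolding \<psi>_def by (intro mset_weak_convD[OF weak] continuous_intros) (use \<delta> in auto)
  ultimately have "(\<lambda>n. \<Sum>p\<in>#Cs n. \<psi> p) \<longlonglongrightarrow> 0" by simp
  then have "eventually (\<lambda>n. (\<Sum>p\<in>#Cs n. \<psi> p) < 1) sequentially"
    by (rule order_tendstoD(2)) simp
  then show ?thesis
  proof (eventually_elim, intro ballI)
    fix n p assume sum_lt: "(\<Sum>p\<in>#Cs n. \<psi> p) < 1" and p: "p \<in># Cs n"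
    have "\<psi> p \<le> (\<Sum>p\<in>#Cs n. \<psi> p)"
      by (rule member_le_sum_mset[OF p]) (use \<delta> in \<open>simp add: \<psi>_def infdist_nonneg\<close>)
    then have "infdist p (set_mset C) / \<delta> < 1" using sum_lt by (simp add: \<psi>_def)
    then have "infdist p (set_mset C) < \<delta>" using \<delta> by (simp add: field_simps)
    then have "(INF q\<in>set_mset C. dist p q) < \<delta>"
      using infdist_notempty[of "set_mset C" p] \<open>C \<noteq> {#}\<close> by simp
    then show "\<exists>q\<in>#C. dist p q < \<delta>"
      by (subst (asm) cINF_less_iff) (use \<open>C \<noteq> {#}\<close> in \<open>auto intro: bdd_belowI[of _ 0]\<close>)
  qed
qed

lemma continuous_interpolation_separated:
  fixes S :: "'a::metric_space set" and v :: "'a \<Rightarrow> 'c::real_normed_vector"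
  assumes S: "finite S" and \<delta>: "0 < \<delta>"
    and sep: "\<And>q q'. q \<in> S \<Longrightarrow> q' \<in> S \<Longrightarrow> q \<noteq> q' \<Longrightarrow> 3 * \<delta> < dist q q'"
  obtains \<Phi> where "continuous_on UNIV \<Phi>" "\<And>q p. q \<in> S \<Longrightarrow> dist p q < \<delta> \<Longrightarrow> \<Phi> p = v q"
proof
  define bump where "bump (q::'a) p = max 0 (min 1 (2 - dist p q / \<delta>))" for q p
  show "continuous_on UNIV (\<lambda>p. \<Sum>q\<in>S. bump q p *\<^sub>R v q)"
    unfolding bump_def by (intro continuous_intros) (use \<delta> in auto)
  fix q p :: 'a assume q: "q \<in> S" "dist p q < \<delta>"
  have "bump q p = 1" using q \<delta> by (simp add: bump_def field_simps)
  moreover have "bump q' p = 0" if "q' \<in> S - {q}" for q'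
  proof -
    have "dist q q' \<le> dist p q + dist p q'" by (metis dist_commute dist_triangle)
    moreover have "3 * \<delta> < dist q q'" using sep[of q q'] that q by auto
    ultimately have "2 - dist p q' / \<delta> \<le> 0" using q \<delta> by (simp add: field_simps)
    then show ?thesis by (simp add: bump_def)
  qed
  ultimately show "(\<Sum>q\<in>S. bump q p *\<^sub>R v q) = v q" by (simp add: sum.remove[OF S q(1)])
qed

lemma exists_separating_radius:
  fixes S :: "'a::metric_space set" and \<phi> :: "'a \<Rightarrow> 'c::metric_space"
  assumes S: "finite S" and cont: "\<And>q. q \<in> S \<Longrightarrow> isCont \<phi> q" and e: "0 < e"
  obtains \<delta> where "0 < \<delta>" "\<And>q p. q \<in> S \<Longrightarrow> dist p q < \<delta> \<Longrightarrow> dist (\<phi> p) (\<phi> q) < e"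
    "\<And>q q'. q \<in> S \<Longrightarrow> q' \<in> S \<Longrightarrow> q \<noteq> q' \<Longrightarrow> 3 * \<delta> < dist q q'"
proof -
  have osc: "eventually (\<lambda>\<delta>. \<forall>q\<in>S. \<forall>p. dist p q < \<delta> \<longrightarrow> dist (\<phi> p) (\<phi> q) < e) (at_right 0)"
  proof (intro eventually_ball_finite[OF S] ballI)
    fix q assume "q \<in> S"
    then obtain d where "0 < d" "\<forall>p. dist p q < d \<longrightarrow> dist (\<phi> p) (\<phi> q) < e"
      using cont[OF \<open>q \<in> S\<close>] e unfolding continuous_at_eps_delta by blast
    then show "eventually (\<lambda>\<delta>. \<forall>p. dist p q < \<delta> \<longrightarrow> dist (\<phi> p) (\<phi> q) < e) (at_right 0)"
      unfolding eventually_at_right[OF \<open>0 < d\<close>] by (intro exI[of _ d]) auto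
  qed
  have sep: "eventually (\<lambda>\<delta>. \<forall>q\<in>S. \<forall>q'\<in>S. q \<noteq> q' \<longrightarrow> 3 * \<delta> < dist q q') (at_right 0)"
  proof (intro eventually_ball_finite[OF S] ballI)
    fix q q' :: 'a
    show "eventually (\<lambda>\<delta>. q \<noteq> q' \<longrightarrow> 3 * \<delta> < dist q q') (at_right 0)"
    proof (cases "q = q'")
      case False
      then have "0 < dist q q' / 3" by simp
      then show ?thesis unfolding eventually_at_right[OF \<open>0 < dist q q' / 3\<close>]
        by (intro exI[of _ "dist q q' / 3"]) auto
    qed simp
  qed
  obtain b where "0 < b" and b: "\<And>\<delta>. 0 < \<delta> \<Longrightarrow> \<delta> < b \<Longrightarrow>
      (\<forall>q\<in>S. \<forall>p. dist p q < \<delta> \<longrightarrow> dist (\<phi> p) (\<phi> q) < e) \<and> (\<forall>q\<in>S. \<forall>q'\<in>S. q \<noteq> q' \<longrightarrow> 3 * \<delta> < dist q q')"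
    using eventually_conj[OF osc sep] unfolding eventually_at_right_field by auto
  define \<delta> where "\<delta> = b / 2"
  have \<delta>: "0 < \<delta>" "\<forall>q\<in>S. \<forall>p. dist p q < \<delta> \<longrightarrow> dist (\<phi> p) (\<phi> q) < e"
      "\<forall>q\<in>S. \<forall>q'\<in>S. q \<noteq> q' \<longrightarrow> 3 * \<delta> < dist q q'"
    using b[of \<delta>] \<open>0 < b\<close> by (simp_all add: \<delta>_def)
  show ?thesis
  proof (rule that)
    show "dist (\<phi> p) (\<phi> q) < e" if "q \<in> S" "dist p q < \<delta>" for q p
      using \<delta>(2) that by simp
    show "3 * \<delta> < dist q q'" if "q \<in> S" "q' \<in> S" "q \<noteq> q'" for q q'
      using \<delta>(3) that by simp
  qed (rule \<delta>(1))
qed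

text \<open>Weak convergence only tests continuous functions, but since the limit configuration is
  finite, continuity at its points suffices: near them the test function is replaced by a
  continuous locally constant interpolation, and the remaining points of \<open>Cs n\<close> cannot
  escape from the neighbourhoods.\<close>

lemma mset_weak_conv_isCont:
  fixes \<phi> :: "'a::metric_space \<Rightarrow> 'c::euclidean_space"
  assumes weak: "mset_weak_conv K Cs C" and cont: "\<And>q. q \<in># C \<Longrightarrow> isCont \<phi> q"
  shows "(\<lambda>n. \<Sum>p\<in>#Cs n. \<phi> p) \<longlonglongrightarrow> (\<Sum>p\<in>#C. \<phi> p)"
proof (cases "C = {#}")
  case True
  then have "eventually (\<lambda>n. size (Cs n) = 0) sequentially"
    using mset_weak_conv_eventually_size[OF weak] by simp
  then have "eventually (\<lambda>n. (\<Sum>p\<in>#Cs n. \<phi> p) = (\<Sum>p\<in>#C. \<phi> p)) sequentially"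
    by eventually_elim (simp add: True)
  then show ?thesis by (rule tendsto_eventually)
next
  case False
  define N where "N = size C"
  show ?thesis
  proof (rule tendstoI)
    fix \<epsilon> :: real assume "0 < \<epsilon>"
    define e where "e = \<epsilon> / (real N + 1)"
    have e: "0 < e" using \<open>0 < \<epsilon>\<close> by (simp add: e_def)
    have "real N * e + e = (real N + 1) * e" by (simp add: algebra_simps)
    then have N_e: "real N * e + e = \<epsilon>" by (simp add: e_def)
    obtain \<delta> where \<delta>: "0 < \<delta>"
      and osc: "\<And>q p. q \<in># C \<Longrightarrow> dist p q < \<delta> \<Longrightarrow> dist (\<phi> p) (\<phi> q) < e"
      and sep: "\<And>q q'. q \<in># C \<Longrightarrow> q' \<in># C \<Longrightarrow> q \<noteq> q' \<Longrightarrow> 3 * \<delta> < dist q q'"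
      using exists_separating_radius[OF finite_set_mset cont e] by blast
    obtain \<Phi> where \<Phi>: "continuous_on UNIV \<Phi>" and near: "\<And>q p. q \<in># C \<Longrightarrow> dist p q < \<delta> \<Longrightarrow> \<Phi> p = \<phi> q"
      using continuous_interpolation_separated[OF finite_set_mset \<delta> sep] by blast
    have "(\<Sum>p\<in>#C. \<Phi> p) = (\<Sum>p\<in>#C. \<phi> p)"
      by (intro arg_cong[where f=sum_mset] image_mset_cong near) (simp_all add: \<delta>)
    then have "eventually (\<lambda>n. dist (\<Sum>p\<in>#Cs n. \<Phi> p) (\<Sum>p\<in>#C. \<phi> p) < e) sequentially"
      using tendstoD[OF mset_weak_conv_vector[OF weak \<Phi>] e] by simp
    then show "eventually (\<lambda>n. dist (\<Sum>p\<in>#Cs n. \<phi> p) (\<Sum>p\<in>#C. \<phi> p) < \<epsilon>) sequentially"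
      using mset_weak_conv_eventually_near[OF weak False \<delta>] mset_weak_conv_eventually_size[OF weak]
    proof eventually_elim
      case (elim n)
      have "norm (\<phi> p - \<Phi> p) \<le> e" if p: "p \<in># Cs n" for p
      proof -
        obtain q where q: "q \<in># C" "dist p q < \<delta>" using elim(2) p by blast
        show ?thesis using near[OF q] osc[OF q] by (simp add: dist_norm)
      qed
      then have "norm (\<Sum>p\<in>#Cs n. \<phi> p - \<Phi> p) \<le> real N * e"
        using norm_sum_mset_le_size[of "Cs n" "\<lambda>p. \<phi> p - \<Phi> p" e] elim(3) by (simp add: N_def)
      then have "dist (\<Sum>p\<in>#Cs n. \<phi> p) (\<Sum>p\<in>#Cs n. \<Phi> p) \<le> real N * e"
        by (simp add: dist_norm sum_mset_subtractf)
      then have "dist (\<Sum>p\<in>#Cs n. \<phi> p) (\<Sum>p\<in>#C. \<phi> p) < real N * e + e"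
        using elim(1) dist_triangle[of "\<Sum>p\<in>#Cs n. \<phi> p" "\<Sum>p\<in>#C. \<phi> p" "\<Sum>p\<in>#Cs n. \<Phi> p"]
        by linarith
      then show ?case using N_e by simp
    qed
  qed
qed


section \<open>Integrability of the kernel on the cube\<close>

lemma cube_borel [measurable]: "cube R \<in> sets (borel :: 'a::euclidean_space measure)"
  unfolding cube_def by simp

lemma emeasure_cube_finite: "emeasure lborel (cube R :: 'a::euclidean_space set) < \<infinity>"
  unfolding cube_def by (rule emeasure_lborel_cbox_finite)

lemma indicator_cube:
  fixes x :: "'a::euclidean_space"
  shows "indicator (cube R) x = (\<Prod>b\<in>Basis. indicator {-(R/2)..R/2} (x \<bullet> b) :: real)"
  by (auto simp: cube_def mem_box indicator_def prod.neutral_const prod_zero_iff)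

lemma nn_integral_abs_powr_interval:
  assumes a: "-1 < a" and T: "0 \<le> T"
  obtains I where "0 \<le> I" "(\<integral>\<^sup>+ t. indicator {-T..T} t * ennreal (\<bar>t::real\<bar> powr a) \<partial>lborel) = ennreal I"
proof -
  have right: "(\<lambda>t::real. \<bar>t\<bar> powr a) integrable_on {0..T}"
    by (rule integrable_eq[OF integrable_on_powr_from_0[OF a T]]) auto
  then have left: "(\<lambda>t::real. \<bar>t\<bar> powr a) integrable_on {-T..0}"
    using Henstock_Kurzweil_Integration.integrable_reflect_real[where f="\<lambda>t::real. \<bar>t\<bar> powr a" and a=0 and b=T]
    by simp
  have "(\<lambda>t::real. \<bar>t\<bar> powr a) integrable_on {-T..T}"
    by (rule Henstock_Kurzweil_Integration.integrable_combine[OF _ _ left right]) (use T in auto)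
  then obtain I where I: "((\<lambda>t::real. \<bar>t\<bar> powr a) has_integral I) {-T..T}"
    by (auto simp: integrable_on_def)
  show ?thesis
  proof
    show "0 \<le> I" by (rule has_integral_nonneg[OF I]) simp
    have "(\<integral>\<^sup>+ t. indicator {-T..T} t * ennreal (\<bar>t::real\<bar> powr a) \<partial>lborel)
        = (\<integral>\<^sup>+ t. ennreal (indicator {-T..T} t * \<bar>t::real\<bar> powr a) \<partial>lborel)"
      by (intro nn_integral_cong) (auto split: split_indicator)
    also have "\<dots> = ennreal I"
      using nn_integral_has_integral_lebesgue[OF _ I] by simp
    finally show "(\<integral>\<^sup>+ t. indicator {-T..T} t * ennreal (\<bar>t::real\<bar> powr a) \<partial>lborel) = ennreal I" .
  qed
qed

lemma nn_integral_abs_powr_shift_le: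
  fixes R c :: real
  assumes c: "\<bar>c\<bar> \<le> R / 2"
  shows "(\<integral>\<^sup>+ t. ennreal (indicator {-(R/2)..R/2} t * \<bar>c - t\<bar> powr a) \<partial>lborel)
       \<le> (\<integral>\<^sup>+ t. indicator {-R..R} t * ennreal (\<bar>t\<bar> powr a) \<partial>lborel)"
proof -
  let ?g = "\<lambda>t::real. indicator {-R..R} t * ennreal (\<bar>t\<bar> powr a)"
  have "(\<integral>\<^sup>+ t. ennreal (indicator {-(R/2)..R/2} t * \<bar>c - t\<bar> powr a) \<partial>lborel)
      \<le> (\<integral>\<^sup>+ t. ?g (c + (-1) * t) \<partial>lborel)"
    by (rule nn_integral_mono) (use c in \<open>auto simp: indicator_def\<close>)
  also have "\<dots> = (\<integral>\<^sup>+ t. ?g t \<partial>lborel)"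
    using nn_integral_real_affine[of ?g "-1" c] by simp
  finally show ?thesis .
qed

lemma nn_integral_cube_prod_abs_powr_le:
  fixes X :: "'a::euclidean_space"
  assumes X: "X \<in> cube R"
  shows "(\<integral>\<^sup>+ x. indicator (cube R) x * ennreal (\<Prod>b\<in>Basis. \<bar>(X - x) \<bullet> b\<bar> powr a) \<partial>lborel)
     \<le> (\<integral>\<^sup>+ t. indicator {-R..R} t * ennreal (\<bar>t::real\<bar> powr a) \<partial>lborel) ^ DIM('a)"
proof -
  define f where "f b t = ennreal (indicator {-(R/2)..R/2} t * \<bar>X \<bullet> b - t\<bar> powr a)" for b and t :: real
  have "(\<integral>\<^sup>+ x. indicator (cube R) x * ennreal (\<Prod>b\<in>Basis. \<bar>(X - x) \<bullet> b\<bar> powr a) \<partial>lborel)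
      = (\<integral>\<^sup>+ x. (\<Prod>b\<in>Basis. f b (x \<bullet> b)) \<partial>lborel)"
  proof (intro nn_integral_cong)
    fix x :: 'a
    have "indicator (cube R) x * ennreal (\<Prod>b\<in>Basis. \<bar>(X - x) \<bullet> b\<bar> powr a)
        = ennreal (\<Prod>b\<in>Basis. indicator {-(R/2)..R/2} (x \<bullet> b) * \<bar>X \<bullet> b - x \<bullet> b\<bar> powr a)"
      by (simp add: indicator_mult_ennreal ennreal_mult' mult.commute indicator_cube prod.distrib
          inner_diff_left)
    also have "\<dots> = (\<Prod>b\<in>Basis. f b (x \<bullet> b))"
      unfolding f_def by (rule prod_ennreal[symmetric]) auto
    finally show "indicator (cube R) x * ennreal (\<Prod>b\<in>Basis. \<bar>(X - x) \<bullet> b\<bar> powr a)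
        = (\<Prod>b\<in>Basis. f b (x \<bullet> b))" .
  qed
  also have "\<dots> = (\<Prod>b\<in>Basis. (\<integral>\<^sup>+ t. f b t \<partial>lborel))"
    by (rule nn_integral_lborel_prod) (auto simp: f_def)
  also have "\<dots> \<le> (\<Prod>b::'a\<in>Basis. (\<integral>\<^sup>+ t. indicator {-R..R} t * ennreal (\<bar>t::real\<bar> powr a) \<partial>lborel))"
  proof (rule prod_mono_ennreal)
    fix b :: 'a assume "b \<in> Basis"
    then have "\<bar>X \<bullet> b\<bar> \<le> R / 2" using X by (auto simp: cube_def mem_box)
    then show "(\<integral>\<^sup>+ t. f b t \<partial>lborel) \<le> (\<integral>\<^sup>+ t. indicator {-R..R} t * ennreal (\<bar>t::real\<bar> powr a) \<partial>lborel)"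
      unfolding f_def by (rule nn_integral_abs_powr_shift_le)
  qed
  finally show ?thesis by simp
qed

lemma powr_le_prod_powr:
  assumes "finite B" "0 < r" "\<And>b. b \<in> B \<Longrightarrow> 0 < u b \<and> u b \<le> r" "0 \<le> p"
  shows "r powr (- (real (card B) * p)) \<le> (\<Prod>b\<in>B. u b powr (- p))"
  using assms
proof (induction B rule: finite_induct)
  case (insert b B)
  have "r powr (- (real (card (insert b B)) * p)) = r powr (- p) * r powr (- (real (card B) * p))"
    using insert.hyps by (simp add: powr_add[symmetric] algebra_simps)
  also have "\<dots> \<le> u b powr (- p) * (\<Prod>b\<in>B. u b powr (- p))"
    using insert by (intro mult_mono powr_mono2') (auto intro: prod_nonneg)
  finally show ?case using insert.hyps by simp
qed simp

lemma AE_inner_Basis_nonzero: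
  fixes X :: "'a::euclidean_space"
  shows "AE x in lebesgue. \<forall>b\<in>Basis. (X - x) \<bullet> b \<noteq> 0"
proof (rule AE_finite_allI[OF finite_Basis])
  fix b :: 'a assume "b \<in> Basis"
  then have "{x. x \<bullet> b = X \<bullet> b} \<in> null_sets lebesgue"
    using negligible_standard_hyperplane[of b "X \<bullet> b"] by (simp add: negligible_iff_null_sets)
  then show "AE x in lebesgue. (X - x) \<bullet> b \<noteq> 0"
    by (rule AE_not_in[THEN eventually_mono]) (auto simp: inner_diff_left)
qed

lemma nn_integral_cube_le_prod_abs_powr:
  fixes X :: "'a::euclidean_space" and f :: "'a \<Rightarrow> real"
  assumes X: "X \<in> cube R" and A: "0 \<le> A"
    and bound: "\<And>x. \<forall>b\<in>Basis. (X - x) \<bullet> b \<noteq> 0 \<Longrightarrow> f x \<le> A * (\<Prod>b\<in>Basis. \<bar>(X - x) \<bullet> b\<bar> powr (- p))"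
    and I: "(\<integral>\<^sup>+ t. indicator {-R..R} t * ennreal (\<bar>t::real\<bar> powr (- p)) \<partial>lborel) = ennreal I" "0 \<le> I"
  shows "(\<integral>\<^sup>+ x. indicator (cube R) x * ennreal (f x) \<partial>lebesgue) \<le> ennreal (A * I ^ DIM('a))"
proof -
  let ?P = "\<lambda>x. indicator (cube R) x * ennreal (\<Prod>b\<in>Basis. \<bar>(X - x) \<bullet> b\<bar> powr (- p))"
  have "(\<integral>\<^sup>+ x. indicator (cube R) x * ennreal (f x) \<partial>lebesgue) \<le> (\<integral>\<^sup>+ x. ennreal A * ?P x \<partial>lebesgue)"
  proof (rule nn_integral_mono_AE)
    show "AE x in lebesgue. indicator (cube R) x * ennreal (f x) \<le> ennreal A * ?P x"
      using AE_inner_Basis_nonzero[of X]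
    proof eventually_elim
      case (elim x)
      have "ennreal (f x) \<le> ennreal (A * (\<Prod>b\<in>Basis. \<bar>(X - x) \<bullet> b\<bar> powr (- p)))"
        using bound[OF elim] by (rule ennreal_leI)
      then show ?case using A by (auto simp: indicator_def ennreal_mult prod_nonneg)
    qed
  qed
  also have "\<dots> = ennreal A * (\<integral>\<^sup>+ x. ?P x \<partial>lborel)"
    unfolding nn_integral_completion by (rule nn_integral_cmult) (simp add: cube_def)
  also have "\<dots> \<le> ennreal A * (ennreal I) ^ DIM('a)"
    using nn_integral_cube_prod_abs_powr_le[OF X, of "- p"] I(1) by (intro mult_left_mono) auto
  also have "\<dots> = ennreal (A * I ^ DIM('a))"
    using A I(2) by (simp add: ennreal_power ennreal_mult)
  finally show ?thesis .
qed


section \<open>Convergence of the weighted energy\<close>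

lemma ennreal_tendsto_zero_of_eventually_le:
  fixes a b :: "nat \<Rightarrow> ennreal"
  assumes a: "a \<longlonglongrightarrow> 0" and b: "\<And>r. 0 < r \<Longrightarrow> eventually (\<lambda>n. b n \<le> a n + ennreal r) sequentially"
  shows "b \<longlonglongrightarrow> 0"
proof (rule order_tendstoI)
  fix x :: ennreal assume "0 < x"
  then obtain y where "0 < y" "y < x" using dense by blast
  then obtain r where r: "0 < r" "ennreal r < x"
    by (cases y rule: ennreal_cases) auto
  have "eventually (\<lambda>n. a n < ennreal (r / 2)) sequentially"
    using r(1) by (intro order_tendstoD(2)[OF a]) simp
  moreover have "eventually (\<lambda>n. b n \<le> a n + ennreal (r / 2)) sequentially"
    using r(1) by (intro b) simp
  ultimately show "eventually (\<lambda>n. b n < x) sequentially"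
  proof eventually_elim
    case (elim n)
    have "b n \<le> ennreal (r / 2) + ennreal (r / 2)"
      using elim by (meson add_right_mono less_imp_le order_trans)
    also have "\<dots> = ennreal r" using r(1) by (simp add: ennreal_plus[symmetric])
    finally show ?case using r(2) by (rule le_less_trans)
  qed
qed simp

lemma nn_integral_weighted_sq_tendsto_zero:
  fixes f :: "nat \<Rightarrow> 'b::euclidean_space \<Rightarrow> 'c::euclidean_space"
  assumes [measurable]: "D \<in> sets borel" "w \<in> borel_measurable borel" "\<And>n. f n \<in> borel_measurable borel"
    and w_nonneg: "\<And>X. 0 \<le> w X" and w_fin: "(\<integral>\<^sup>+ X. indicator D X * ennreal (w X) \<partial>lborel) < \<infinity>"
    and bounded: "eventually (\<lambda>n. \<forall>X. norm (f n X) \<le> B) sequentially"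
    and lim: "AE X in lborel. (\<lambda>n. f n X) \<longlonglongrightarrow> 0"
  shows "(\<lambda>n. \<integral>\<^sup>+ X. indicator D X * ennreal (w X * (norm (f n X))\<^sup>2) \<partial>lborel) \<longlonglongrightarrow> 0"
proof -
  obtain N where N: "\<And>n X. N \<le> n \<Longrightarrow> norm (f n X) \<le> B"
    using bounded unfolding eventually_sequentially by blast
  define E where "E n = (\<integral>\<^sup>+ X. indicator D X * ennreal (w X * (norm (f n X))\<^sup>2) \<partial>lborel)" for n
  define u where "u n X = indicator D X * w X * (norm (f (n + N) X))\<^sup>2" for n X
  have u_nonneg: "0 \<le> u n X" for n X using w_nonneg[of X] by (simp add: u_def)
  have "(\<lambda>n. \<integral>\<^sup>+ X. ennreal (norm ((\<lambda>_. 0::real) X - u n X)) \<partial>lborel) \<longlonglongrightarrow> 0"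
  proof (rule nn_integral_dominated_convergence_norm[where w="\<lambda>X. indicator D X * w X * B\<^sup>2"])
    show "u n \<in> borel_measurable lborel" for n
      unfolding u_def[abs_def] measurable_lborel2 by measurable
    show "(\<lambda>X. indicator D X * w X * B\<^sup>2) \<in> borel_measurable lborel"
      unfolding measurable_lborel2 by measurable
    have "(\<integral>\<^sup>+ X. ennreal (indicator D X * w X * B\<^sup>2) \<partial>lborel)
        = ennreal (B\<^sup>2) * (\<integral>\<^sup>+ X. indicator D X * ennreal (w X) \<partial>lborel)"
      by (subst nn_integral_cmult[symmetric]) (auto intro!: nn_integral_cong simp: ennreal_mult'
          w_nonneg mult.commute measurable_lborel2 split: split_indicator)
    then show "(\<integral>\<^sup>+ X. ennreal (indicator D X * w X * B\<^sup>2) \<partial>lborel) < \<infinity>"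
      using w_fin by (simp add: ennreal_mult_less_top)
    show "AE X in lborel. norm (u n X) \<le> indicator D X * w X * B\<^sup>2" for n
    proof (intro AE_I2)
      fix X
      have "(norm (f (n + N) X))\<^sup>2 \<le> B\<^sup>2" using N[of "n + N" X] by (intro power_mono) auto
      then show "norm (u n X) \<le> indicator D X * w X * B\<^sup>2"
        using u_nonneg[of n X] w_nonneg[of X] by (simp add: u_def mult_left_mono)
    qed
    show "AE X in lborel. (\<lambda>n. u n X) \<longlonglongrightarrow> 0"
      using lim
    proof eventually_elim
      case (elim X)
      have "(\<lambda>n. u n X) \<longlonglongrightarrow> indicator D X * w X * (norm (0::'c))\<^sup>2"
        unfolding u_def by (intro tendsto_intros LIMSEQ_ignore_initial_segment elim)
      then show ?case by simp
    qed
  qed simp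
  moreover have "(\<integral>\<^sup>+ X. ennreal (norm ((\<lambda>_. 0::real) X - u n X)) \<partial>lborel) = E (n + N)" for n
    unfolding E_def
  proof (intro nn_integral_cong)
    fix X
    have "norm (0 - u n X) = u n X" using u_nonneg[of n X] by simp
    then show "ennreal (norm ((\<lambda>_. 0::real) X - u n X)) = indicator D X * ennreal (w X * (norm (f (n + N) X))\<^sup>2)"
      unfolding u_def by (simp add: mult.assoc indicator_mult_ennreal)
  qed
  ultimately have "(\<lambda>n. E (n + N)) \<longlonglongrightarrow> 0" by simp
  then show ?thesis unfolding E_def by (rule LIMSEQ_offset)
qed

lemma nn_integral_weighted_sq_le:
  fixes F f g w :: "'b::euclidean_space \<Rightarrow> real"
  assumes [measurable]: "D \<in> sets borel" "w \<in> borel_measurable borel"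
    "f \<in> borel_measurable borel" "g \<in> borel_measurable borel"
    and w_nonneg: "\<And>X. 0 \<le> w X" and F_nonneg: "\<And>X. 0 \<le> F X"
    and le: "AE X in lborel. X \<in> D \<longrightarrow> F X \<le> f X + g X"
  shows "(\<integral>\<^sup>+ X. indicator D X * ennreal (w X * (F X)\<^sup>2) \<partial>lborel)
    \<le> 2 * (\<integral>\<^sup>+ X. indicator D X * ennreal (w X * (f X)\<^sup>2) \<partial>lborel)
      + 2 * (\<integral>\<^sup>+ X. indicator D X * ennreal (w X * (g X)\<^sup>2) \<partial>lborel)"
proof -
  have "(\<integral>\<^sup>+ X. indicator D X * ennreal (w X * (F X)\<^sup>2) \<partial>lborel)
      \<le> (\<integral>\<^sup>+ X. 2 * (indicator D X * ennreal (w X * (f X)\<^sup>2))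
                + 2 * (indicator D X * ennreal (w X * (g X)\<^sup>2)) \<partial>lborel)"
  proof (rule nn_integral_mono_AE)
    show "AE X in lborel. indicator D X * ennreal (w X * (F X)\<^sup>2)
        \<le> 2 * (indicator D X * ennreal (w X * (f X)\<^sup>2)) + 2 * (indicator D X * ennreal (w X * (g X)\<^sup>2))"
      using le
    proof eventually_elim
      case (elim X)
      show ?case
      proof (cases "X \<in> D")
        case True
        have "(F X)\<^sup>2 \<le> (f X + g X)\<^sup>2" using elim True F_nonneg[of X] by (intro power_mono) auto
        also have "\<dots> \<le> 2 * (f X)\<^sup>2 + 2 * (g X)\<^sup>2"
          using zero_le_power2[of "f X - g X"] by (simp add: power2_eq_square algebra_simps)
        finally have "w X * (F X)\<^sup>2 \<le> w X * (2 * (f X)\<^sup>2 + 2 * (g X)\<^sup>2)"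
          using w_nonneg[of X] by (rule mult_left_mono)
        then have "w X * (F X)\<^sup>2 \<le> 2 * (w X * (f X)\<^sup>2) + 2 * (w X * (g X)\<^sup>2)"
          by (simp add: algebra_simps)
        then have "ennreal (w X * (F X)\<^sup>2) \<le> ennreal (2 * (w X * (f X)\<^sup>2) + 2 * (w X * (g X)\<^sup>2))"
          by (rule ennreal_leI)
        then show ?thesis
          using True w_nonneg[of X] by (simp add: ennreal_plus ennreal_mult)
      qed simp
    qed
  qed
  also have "\<dots> = 2 * (\<integral>\<^sup>+ X. indicator D X * ennreal (w X * (f X)\<^sup>2) \<partial>lborel)
      + 2 * (\<integral>\<^sup>+ X. indicator D X * ennreal (w X * (g X)\<^sup>2) \<partial>lborel)"
    by (subst nn_integral_add) (simp_all add: nn_integral_cmult measurable_lborel2)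
  finally show ?thesis .
qed

lemma AE_lborel_avoids_countable_spheres:
  fixes Q :: "'b::euclidean_space set"
  assumes "countable Q"
  shows "AE X in lborel. \<forall>q\<in>Q. X \<noteq> q \<and> dist X q \<noteq> \<eta>"
proof (subst AE_ball_countable[OF assms], intro ballI)
  fix q :: 'b
  have "sphere q \<eta> \<in> null_sets lebesgue"
    using negligible_sphere[of q \<eta>] by (simp add: negligible_iff_null_sets)
  then obtain N where N: "N \<in> null_sets lborel" "sphere q \<eta> \<subseteq> N"
    unfolding null_sets_completion_iff2 by blast
  show "AE X in lborel. X \<noteq> q \<and> dist X q \<noteq> \<eta>"
    using AE_lborel_singleton[of q] AE_not_in[OF N(1)]
  proof eventually_elim
    case (elim X)
    then have "X \<notin> sphere q \<eta>" using N(2) by blast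
    then show ?case using elim by (simp add: dist_commute)
  qed
qed

lemma norm_set_integral_scaleR_le:
  fixes F :: "'a::euclidean_space \<Rightarrow> 'b::euclidean_space" and h :: "'a \<Rightarrow> real"
  assumes [measurable]: "K \<in> sets lebesgue" "F \<in> borel_measurable lebesgue"
    and h: "AE x in lebesgue. x \<in> K \<longrightarrow> \<bar>h x\<bar> \<le> \<epsilon>" and \<epsilon>: "0 \<le> \<epsilon>" and \<Phi>: "0 \<le> \<Phi>"
    and F: "(\<integral>\<^sup>+ x. indicator K x * ennreal (norm (F x)) \<partial>lebesgue) \<le> ennreal \<Phi>"
  shows "norm (LINT x : K | lebesgue. h x *\<^sub>R F x) \<le> \<epsilon> * \<Phi>"
proof (cases "integrable lebesgue (\<lambda>x. indicator K x *\<^sub>R (h x *\<^sub>R F x))")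
  case True
  have "ennreal (norm (LINT x : K | lebesgue. h x *\<^sub>R F x))
      \<le> (\<integral>\<^sup>+ x. norm (indicator K x *\<^sub>R (h x *\<^sub>R F x)) \<partial>lebesgue)"
    unfolding set_lebesgue_integral_def by (rule integral_norm_bound_ennreal[OF True])
  also have "\<dots> \<le> (\<integral>\<^sup>+ x. ennreal \<epsilon> * (indicator K x * ennreal (norm (F x))) \<partial>lebesgue)"
  proof (rule nn_integral_mono_AE)
    show "AE x in lebesgue. ennreal (norm (indicator K x *\<^sub>R (h x *\<^sub>R F x)))
        \<le> ennreal \<epsilon> * (indicator K x * ennreal (norm (F x)))"
      using h
    proof eventually_elim
      case (elim x)
      then have "ennreal (norm (indicator K x *\<^sub>R (h x *\<^sub>R F x))) \<le> ennreal (\<epsilon> * (indicator K x * norm (F x)))"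
        by (intro ennreal_leI) (auto simp: indicator_def intro: mult_right_mono)
      then show ?case using \<epsilon> by (simp add: ennreal_mult indicator_mult_ennreal mult.commute)
    qed
  qed
  also have "\<dots> = ennreal \<epsilon> * (\<integral>\<^sup>+ x. indicator K x * ennreal (norm (F x)) \<partial>lebesgue)"
    by (rule nn_integral_cmult) measurable
  also have "\<dots> \<le> ennreal \<epsilon> * ennreal \<Phi>" using F by (rule mult_left_mono) simp
  also have "\<dots> = ennreal (\<epsilon> * \<Phi>)" using \<epsilon> \<Phi> by (simp add: ennreal_mult)
  finally show ?thesis using \<epsilon> \<Phi> by (simp add: ennreal_le_iff)
next
  case False
  then show ?thesis using \<epsilon> \<Phi>
    by (simp add: set_lebesgue_integral_def not_integrable_integral_eq)
qed


lemma borel_measurable_sum_mset [measurable]: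
  fixes f :: "'x \<Rightarrow> 'y \<Rightarrow> 'c::{second_countable_topology, real_normed_vector}"
  assumes "\<And>p. p \<in># M \<Longrightarrow> f p \<in> borel_measurable N"
  shows "(\<lambda>X. \<Sum>p\<in>#M. f p X) \<in> borel_measurable N"
  using assms by (induction M) auto

lemma norm_Efield_le:
  fixes e :: "'a::euclidean_space \<Rightarrow> 'b::euclidean_space"
  assumes dk: "decreasing_kernel lg s" and \<eta>: "0 < \<eta>" and e [measurable]: "e \<in> borel_measurable borel"
    and avoid: "\<And>p. p \<in># C + C' \<Longrightarrow> X \<noteq> e p \<and> dist X (e p) \<noteq> \<eta>"
    and close: "AE x in lebesgue. x \<in> cube R \<longrightarrow> \<bar>\<mu>' x - \<mu> x\<bar> \<le> \<epsilon>" and \<epsilon>: "0 \<le> \<epsilon>"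
    and \<Phi>: "(\<integral>\<^sup>+ x. indicator (cube R) x * ennreal (norm (vgrad (gker lg s) (X - e x))) \<partial>lebesgue) \<le> ennreal \<Phi>"
      "0 \<le> \<Phi>"
  shows "norm (Efield lg s R \<eta> e C C' \<mu> \<mu>' X)
    \<le> norm ((\<Sum>p\<in>#C. trunc_grad lg s \<eta> (X - e p)) - (\<Sum>p\<in>#C'. trunc_grad lg s \<eta> (X - e p))) + \<epsilon> * \<Phi>"
proof -
  have sum_eq: "(\<Sum>p\<in>#M. vgrad (gtrunc lg s \<eta>) (X - e p)) = (\<Sum>p\<in>#M. trunc_grad lg s \<eta> (X - e p))"
    if "set_mset M \<subseteq> set_mset (C + C')" for M
  proof (intro arg_cong[where f=sum_mset] image_mset_cong vgrad_gtrunc[OF dk \<eta>])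
    fix p assume "p \<in># M"
    then have "X \<noteq> e p \<and> dist X (e p) \<noteq> \<eta>" using that avoid by blast
    then show "X - e p \<noteq> 0" "norm (X - e p) \<noteq> \<eta>" by (simp_all add: dist_norm)
  qed
  define L where "L = (LINT x : cube R | lebesgue. (\<mu> x - \<mu>' x) *\<^sub>R vgrad (gker lg s) (X - e x))"
  have "norm L \<le> \<epsilon> * \<Phi>"
    unfolding L_def
  proof (rule norm_set_integral_scaleR_le)
    show "cube R \<in> sets lebesgue" by (simp add: cube_def)
    show "(\<lambda>x. vgrad (gker lg s) (X - e x)) \<in> borel_measurable lebesgue"
      by (intro measurable_completion) (unfold measurable_lborel2, measurable)
    show "AE x in lebesgue. x \<in> cube R \<longrightarrow> \<bar>\<mu> x - \<mu>' x\<bar> \<le> \<epsilon>"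
      using close by (simp add: abs_minus_commute)
  qed (fact \<epsilon> \<Phi>)+
  have "norm (Efield lg s R \<eta> e C C' \<mu> \<mu>' X)
      = norm ((\<Sum>p\<in>#C. trunc_grad lg s \<eta> (X - e p)) - (\<Sum>p\<in>#C'. trunc_grad lg s \<eta> (X - e p)) - L)"
    unfolding Efield_def L_def by (simp add: sum_eq)
  also have "\<dots> \<le> norm ((\<Sum>p\<in>#C. trunc_grad lg s \<eta> (X - e p)) - (\<Sum>p\<in>#C'. trunc_grad lg s \<eta> (X - e p))) + norm L"
    by (rule norm_triangle_ineq4)
  finally show ?thesis using \<open>norm L \<le> \<epsilon> * \<Phi>\<close> by simp
qed

lemma weighted_energy_tendsto_zero:
  fixes e :: "'a::euclidean_space \<Rightarrow> 'b::euclidean_space" and D :: "'b set" and w \<Phi> :: "'b \<Rightarrow> real"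
    and \<mu> :: "'a \<Rightarrow> real" and \<mu>s :: "nat \<Rightarrow> 'a \<Rightarrow> real"
  assumes dk: "decreasing_kernel lg s" and \<eta>: "0 < \<eta>" and e: "continuous_on UNIV e"
    and [measurable]: "D \<in> sets borel" "w \<in> borel_measurable borel" "\<Phi> \<in> borel_measurable borel"
    and w_nonneg: "\<And>X. 0 \<le> w X" and \<Phi>_nonneg: "\<And>X. 0 \<le> \<Phi> X"
    and w_fin: "(\<integral>\<^sup>+ X. indicator D X * ennreal (w X) \<partial>lborel) < \<infinity>"
    and \<Phi>_fin: "(\<integral>\<^sup>+ X. indicator D X * ennreal (w X * (\<Phi> X)\<^sup>2) \<partial>lborel) < \<infinity>"
    and \<Phi>_bound: "AE X in lborel. X \<in> D \<longrightarrow>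
      (\<integral>\<^sup>+ x. indicator (cube R) x * ennreal (norm (vgrad (gker lg s) (X - e x))) \<partial>lebesgue) \<le> ennreal (\<Phi> X)"
    and weak: "mset_weak_conv (cube R) Cs C"
    and Linf: "\<And>\<epsilon>. 0 < \<epsilon> \<Longrightarrow>
      eventually (\<lambda>n. AE x in lebesgue. x \<in> cube R \<longrightarrow> \<bar>\<mu>s n x - \<mu> x\<bar> \<le> \<epsilon>) sequentially"
  shows "(\<lambda>n. \<integral>\<^sup>+ X. indicator D X * ennreal (w X * (norm (Efield lg s R \<eta> e C (Cs n) \<mu> (\<mu>s n) X))\<^sup>2)
    \<partial>lebesgue) \<longlonglongrightarrow> 0"
proof -
  have [measurable]: "e \<in> borel_measurable borel" using e by (rule borel_measurable_continuous_onI)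
  define P where "P n X = (\<Sum>p\<in>#C. trunc_grad lg s \<eta> (X - e p)) - (\<Sum>p\<in>#Cs n. trunc_grad lg s \<eta> (X - e p))"
    for n X
  have [measurable]: "P n \<in> borel_measurable borel" for n unfolding P_def[abs_def] by measurable
  have avoid: "AE X in lborel. \<forall>q\<in>e ` (set_mset C \<union> (\<Union>n. set_mset (Cs n))). X \<noteq> q \<and> dist X q \<noteq> \<eta>"
    by (rule AE_lborel_avoids_countable_spheres) (auto intro: countable_finite)
  have "(\<lambda>n. \<integral>\<^sup>+ X. indicator D X * ennreal (w X * (norm (P n X))\<^sup>2) \<partial>lborel) \<longlonglongrightarrow> 0"
  proof (rule nn_integral_weighted_sq_tendsto_zero)
    let ?M = "kernel_grad_const lg s * \<eta> powr (- (s + 1))"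
    have sum_bound: "norm (\<Sum>p\<in>#M. trunc_grad lg s \<eta> (X - e p)) \<le> real (size M) * ?M" for M X
      by (intro norm_sum_mset_le_size norm_trunc_grad_le[OF dk \<eta>])
    show "eventually (\<lambda>n. \<forall>X. norm (P n X) \<le> 2 * real (size C) * ?M) sequentially"
      using mset_weak_conv_eventually_size[OF weak]
    proof (eventually_elim, intro allI)
      fix n X assume "size (Cs n) = size C"
      have "norm (P n X) \<le> norm (\<Sum>p\<in>#C. trunc_grad lg s \<eta> (X - e p))
          + norm (\<Sum>p\<in>#Cs n. trunc_grad lg s \<eta> (X - e p))"
        unfolding P_def by (rule norm_triangle_ineq4)
      also have "\<dots> \<le> real (size C) * ?M + real (size (Cs n)) * ?M"
        by (intro add_mono sum_bound)
      finally show "norm (P n X) \<le> 2 * real (size C) * ?M"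
        using \<open>size (Cs n) = size C\<close> by simp
    qed
    show "AE X in lborel. (\<lambda>n. P n X) \<longlonglongrightarrow> 0"
      using avoid
    proof eventually_elim
      case (elim X)
      have "(\<lambda>n. \<Sum>p\<in>#Cs n. trunc_grad lg s \<eta> (X - e p)) \<longlonglongrightarrow> (\<Sum>p\<in>#C. trunc_grad lg s \<eta> (X - e p))"
      proof (rule mset_weak_conv_isCont[OF weak])
        fix q assume "q \<in># C"
        then have "norm (X - e q) \<noteq> \<eta>" using elim by (auto simp: dist_norm)
        moreover have "isCont (\<lambda>p. X - e p) q"
          using e by (intro continuous_intros) (simp add: continuous_on_eq_continuous_at)
        ultimately show "isCont (\<lambda>p. trunc_grad lg s \<eta> (X - e p)) q"
          using isCont_o2 isCont_trunc_grad[OF _ \<eta>] by blast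
      qed
      then have "(\<lambda>n. P n X) \<longlonglongrightarrow> (\<Sum>p\<in>#C. trunc_grad lg s \<eta> (X - e p)) - (\<Sum>p\<in>#C. trunc_grad lg s \<eta> (X - e p))"
        unfolding P_def by (intro tendsto_diff tendsto_const)
      then show ?case by simp
    qed
  qed (use w_nonneg w_fin in auto)
  then have point_part: "(\<lambda>n. 2 * \<integral>\<^sup>+ X. indicator D X * ennreal (w X * (norm (P n X))\<^sup>2) \<partial>lborel) \<longlonglongrightarrow> 0"
    using ennreal_tendsto_cmult[of 2] by fastforce
  obtain K where K: "(\<integral>\<^sup>+ X. indicator D X * ennreal (w X * (\<Phi> X)\<^sup>2) \<partial>lborel) = ennreal K" "0 \<le> K"
    using \<Phi>_fin by (cases "\<integral>\<^sup>+ X. indicator D X * ennreal (w X * (\<Phi> X)\<^sup>2) \<partial>lborel" rule: ennreal_cases) auto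
  show ?thesis
  proof (rule ennreal_tendsto_zero_of_eventually_le[OF point_part])
    fix r :: real assume "0 < r"
    define \<epsilon> where "\<epsilon> = sqrt (r / (2 * (K + 1)))"
    have \<epsilon>: "0 < \<epsilon>" "2 * \<epsilon>\<^sup>2 * K \<le> r"
      using \<open>0 < r\<close> K(2) by (auto simp: \<epsilon>_def field_simps)
    show "eventually (\<lambda>n. (\<integral>\<^sup>+ X. indicator D X * ennreal (w X * (norm (Efield lg s R \<eta> e C (Cs n) \<mu> (\<mu>s n) X))\<^sup>2)
        \<partial>lebesgue) \<le> 2 * (\<integral>\<^sup>+ X. indicator D X * ennreal (w X * (norm (P n X))\<^sup>2) \<partial>lborel) + ennreal r) sequentially"
      using Linf[OF \<epsilon>(1)]
    proof eventually_elim
      case (elim n)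
      note close = elim
      have "AE X in lborel. X \<in> D \<longrightarrow> norm (Efield lg s R \<eta> e C (Cs n) \<mu> (\<mu>s n) X) \<le> norm (P n X) + \<epsilon> * \<Phi> X"
        using avoid \<Phi>_bound
    proof eventually_elim
      case (elim X)
      show ?case
      proof
        assume "X \<in> D"
        with elim(2) have bound: "(\<integral>\<^sup>+ x. indicator (cube R) x * ennreal (norm (vgrad (gker lg s) (X - e x)))
            \<partial>lebesgue) \<le> ennreal (\<Phi> X)" by simp
        show "norm (Efield lg s R \<eta> e C (Cs n) \<mu> (\<mu>s n) X) \<le> norm (P n X) + \<epsilon> * \<Phi> X"
          unfolding P_def
          by (rule norm_Efield_le[OF dk \<eta>]) (use elim(1) close \<epsilon> bound \<Phi>_nonneg in auto)
      qed
    qed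
      then have "(\<integral>\<^sup>+ X. indicator D X * ennreal (w X * (norm (Efield lg s R \<eta> e C (Cs n) \<mu> (\<mu>s n) X))\<^sup>2) \<partial>lborel)
          \<le> 2 * (\<integral>\<^sup>+ X. indicator D X * ennreal (w X * (norm (P n X))\<^sup>2) \<partial>lborel)
            + 2 * (\<integral>\<^sup>+ X. indicator D X * ennreal (w X * (\<epsilon> * \<Phi> X)\<^sup>2) \<partial>lborel)"
        by (intro nn_integral_weighted_sq_le) (use w_nonneg in auto)
      also have "(\<integral>\<^sup>+ X. indicator D X * ennreal (w X * (\<epsilon> * \<Phi> X)\<^sup>2) \<partial>lborel) = ennreal (\<epsilon>\<^sup>2 * K)"
      proof -
        have "(\<integral>\<^sup>+ X. indicator D X * ennreal (w X * (\<epsilon> * \<Phi> X)\<^sup>2) \<partial>lborel)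
            = (\<integral>\<^sup>+ X. ennreal (\<epsilon>\<^sup>2) * (indicator D X * ennreal (w X * (\<Phi> X)\<^sup>2)) \<partial>lborel)"
          by (intro nn_integral_cong) (simp add: w_nonneg ennreal_mult[symmetric] power_mult_distrib mult_ac)
        also have "\<dots> = ennreal (\<epsilon>\<^sup>2) * ennreal K"
          by (subst nn_integral_cmult) (simp_all add: K(1) measurable_lborel2)
        finally show ?thesis using K(2) by (simp add: ennreal_mult)
      qed
      also have "2 * ennreal (\<epsilon>\<^sup>2 * K) = ennreal (2 * \<epsilon>\<^sup>2 * K)"
        using K(2) by (simp add: ennreal_mult mult.assoc)
      also have "\<dots> \<le> ennreal r" using \<epsilon>(2) by (rule ennreal_leI)
      finally show ?case by (simp add: nn_integral_completion add_left_mono)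
    qed
  qed
qed


section \<open>The two geometric cases\<close>

lemma powr_le_prod_abs_inner_powr:
  fixes z :: "'a::euclidean_space"
  assumes nz: "\<forall>b\<in>Basis. z \<bullet> b \<noteq> 0" and r: "norm z \<le> r" and p: "0 \<le> p"
  shows "r powr (- (real DIM('a) * p)) \<le> (\<Prod>b\<in>Basis. \<bar>z \<bullet> b\<bar> powr (- p))"
proof (rule powr_le_prod_powr[OF finite_Basis _ _ p])
  have "z \<noteq> 0" using nz SOME_Basis by force
  then show "0 < r" using r by (meson zero_less_norm_iff less_le_trans)
  show "0 < \<bar>z \<bullet> b\<bar> \<and> \<bar>z \<bullet> b\<bar> \<le> r" if "b \<in> Basis" for b
    using nz that Basis_le_norm[OF that, of z] r by auto
qed

lemma cube_energy_tendsto_zero: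
  fixes C :: "'a::euclidean_space multiset" and \<mu> :: "'a \<Rightarrow> real"
    and Cs :: "nat \<Rightarrow> 'a multiset" and \<mu>s :: "nat \<Rightarrow> 'a \<Rightarrow> real"
  assumes dk: "decreasing_kernel lg s" and sd: "s + 1 < real DIM('a)" and R: "0 < R" and \<eta>: "0 < \<eta>"
    and weak: "mset_weak_conv (cube R) Cs C"
    and Linf: "\<And>\<epsilon>. 0 < \<epsilon> \<Longrightarrow>
      eventually (\<lambda>n. AE x in lebesgue. x \<in> cube R \<longrightarrow> \<bar>\<mu>s n x - \<mu> x\<bar> \<le> \<epsilon>) sequentially"
  shows "(\<lambda>n. \<integral>\<^sup>+ X. indicator (cube R) X * ennreal ((norm (Efield lg s R \<eta> (\<lambda>x. x) C (Cs n) \<mu> (\<mu>s n) X))\<^sup>2)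
    \<partial>lebesgue) \<longlonglongrightarrow> 0"
proof -
  define p where "p = (s + 1) / real DIM('a)"
  have p: "0 \<le> p" "p < 1" "real DIM('a) * p = s + 1"
    using decreasing_kernel_nonneg[OF dk] sd by (auto simp: p_def field_simps)
  have "-1 < - p" "0 \<le> R" using p R by auto
  then obtain I where I: "0 \<le> I" "(\<integral>\<^sup>+ t. indicator {-R..R} t * ennreal (\<bar>t::real\<bar> powr - p) \<partial>lborel) = ennreal I"
    by (rule nn_integral_abs_powr_interval)
  define \<Phi> where "\<Phi> = kernel_grad_const lg s * I ^ DIM('a)"
  have \<Phi>: "0 \<le> \<Phi>" using kernel_grad_const_nonneg[OF dk] I(1) by (simp add: \<Phi>_def)
  have emeasure_fin: "(\<integral>\<^sup>+ X. indicator (cube R :: 'a set) X * ennreal c \<partial>lborel) < \<infinity>" for c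
    using emeasure_cube_finite[of R, where 'a='a]
    by (auto simp: mult.commute nn_integral_cmult_indicator ennreal_mult_less_top)
  have "(\<lambda>n. \<integral>\<^sup>+ X. indicator (cube R) X * ennreal ((\<lambda>_. 1) X * (norm (Efield lg s R \<eta> (\<lambda>x. x) C (Cs n) \<mu> (\<mu>s n) X))\<^sup>2)
    \<partial>lebesgue) \<longlonglongrightarrow> 0"
  proof (rule weighted_energy_tendsto_zero[where \<Phi>="\<lambda>_. \<Phi>", OF dk \<eta> continuous_on_id])
    show "AE X in (lborel :: 'a measure). X \<in> cube R \<longrightarrow>
        (\<integral>\<^sup>+ x. indicator (cube R) x * ennreal (norm (vgrad (gker lg s) (X - x))) \<partial>lebesgue) \<le> ennreal \<Phi>"
    proof (intro AE_I2 impI)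
      fix X :: 'a assume "X \<in> cube R"
      then show "(\<integral>\<^sup>+ x. indicator (cube R) x * ennreal (norm (vgrad (gker lg s) (X - x))) \<partial>lebesgue) \<le> ennreal \<Phi>"
        unfolding \<Phi>_def
      proof (rule nn_integral_cube_le_prod_abs_powr[OF _ kernel_grad_const_nonneg[OF dk] _ I(2,1)])
        fix x assume nz: "\<forall>b\<in>Basis. (X - x) \<bullet> b \<noteq> 0"
        then have "X - x \<noteq> 0" using SOME_Basis by force
        then have "norm (vgrad (gker lg s) (X - x)) = kernel_grad_const lg s * norm (X - x) powr (- (real DIM('a) * p))"
          using p(3) by (simp add: vgrad_gker norm_kernel_grad[OF dk])
        also have "\<dots> \<le> kernel_grad_const lg s * (\<Prod>b\<in>Basis. \<bar>(X - x) \<bullet> b\<bar> powr (- p))"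
          using nz p(1) kernel_grad_const_nonneg[OF dk]
          by (intro mult_left_mono powr_le_prod_abs_inner_powr) auto
        finally show "norm (vgrad (gker lg s) (X - x))
            \<le> kernel_grad_const lg s * (\<Prod>b\<in>Basis. \<bar>(X - x) \<bullet> b\<bar> powr (- p))" .
      qed
    qed
  qed (use \<Phi> emeasure_fin emeasure_cube_finite weak Linf in auto)
  then show ?thesis by simp
qed

lemma AE_snd_nonzero: "AE X in (lborel :: ('a::euclidean_space \<times> real) measure). snd X \<noteq> 0"
proof -
  have "((0::'a), (1::real)) \<in> Basis" by (simp add: Basis_prod_def)
  then have "{X :: 'a \<times> real. X \<bullet> (0, 1) = 0} \<in> null_sets lebesgue"
    using negligible_standard_hyperplane by (simp add: negligible_iff_null_sets)
  then obtain N where N: "N \<in> null_sets lborel" "{X :: 'a \<times> real. X \<bullet> (0, 1) = 0} \<subseteq> N"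
    unfolding null_sets_completion_iff2 by blast
  show ?thesis
    using AE_not_in[OF N(1)] by eventually_elim (use N(2) in \<open>auto simp: inner_prod_def\<close>)
qed

lemma borel_measurable_abs_snd_powr [measurable]:
  "(\<lambda>X::'a::euclidean_space \<times> real. \<bar>snd X\<bar> powr a) \<in> borel_measurable borel"
proof -
  have "(\<lambda>t::real. \<bar>t\<bar> powr a) \<in> borel_measurable borel" by measurable
  moreover have "(snd :: 'a \<times> real \<Rightarrow> real) \<in> borel_measurable borel"
    by (intro borel_measurable_continuous_onI continuous_intros)
  ultimately show ?thesis by (rule measurable_compose[rotated])
qed

lemma nn_integral_slab_abs_powr_finite:
  assumes a: "-1 < a" and R: "0 \<le> R" and c: "0 \<le> c"
  shows "(\<integral>\<^sup>+ X. indicator (cube R \<times> {-R..R}) X * ennreal (c * \<bar>snd X\<bar> powr a)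
    \<partial>(lborel :: ('a::euclidean_space \<times> real) measure)) < \<infinity>"
proof -
  obtain I where I: "0 \<le> I" "(\<integral>\<^sup>+ t. indicator {-R..R} t * ennreal (\<bar>t::real\<bar> powr a) \<partial>lborel) = ennreal I"
    using a R by (rule nn_integral_abs_powr_interval)
  define f where "f X = indicator (cube R \<times> {-R..R}) X * ennreal (c * \<bar>snd X\<bar> powr a)" for X :: "'a \<times> real"
  have [measurable]: "f \<in> borel_measurable (lborel \<Otimes>\<^sub>M lborel)"
    unfolding f_def[abs_def] lborel_prod[symmetric] measurable_lborel2 cube_def by measurable
  have "(\<integral>\<^sup>+ X. f X \<partial>lborel) = (\<integral>\<^sup>+ x. \<integral>\<^sup>+ y. f (x, y) \<partial>lborel \<partial>lborel)"
    by (simp add: lborel_prod[symmetric] lborel.nn_integral_fst)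
  also have "\<dots> = (\<integral>\<^sup>+ x. ennreal (c * I) * indicator (cube R :: 'a set) x \<partial>lborel)"
  proof (rule nn_integral_cong)
    fix x :: 'a
    have "(\<integral>\<^sup>+ y. f (x, y) \<partial>lborel)
        = (\<integral>\<^sup>+ y. (indicator (cube R) x * ennreal c) * (indicator {-R..R} y * ennreal (\<bar>y\<bar> powr a)) \<partial>lborel)"
      by (intro nn_integral_cong) (auto simp: f_def indicator_times ennreal_mult c split: split_indicator)
    also have "\<dots> = ennreal (c * I) * indicator (cube R) x"
      using I c by (subst nn_integral_cmult) (simp_all add: ennreal_mult mult_ac)
    finally show "(\<integral>\<^sup>+ y. f (x, y) \<partial>lborel) = ennreal (c * I) * indicator (cube R) x" .
  qed
  also have "\<dots> = ennreal (c * I) * emeasure lborel (cube R :: 'a set)"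
    by (rule nn_integral_cmult_indicator) simp
  also have "\<dots> < \<infinity>"
    using emeasure_cube_finite[of R, where 'a='a] by (simp add: ennreal_mult_less_top)
  finally show ?thesis unfolding f_def .
qed

text \<open>For \<open>Z = (z, y)\<close> the kernel singularity is split as
  \<open>|Z|^-(s+1) \<le> |y|^-q * (\<Prod>b. |z\<^sub>b|^-p)\<close>: \<open>p < 1\<close> makes the integral over the cube finite,
  and \<open>\<gamma> - 2q > -1\<close> the weighted square integral in \<open>y\<close>.\<close>

lemma exists_splitting_exponents:
  fixes s d :: real
  assumes d: "0 < d" and s: "0 \<le> s" "d - 2 < s" "s < d"
  obtains p q where "0 \<le> p" "p < 1" "0 \<le> q" "q + d * p = s + 1" "-1 < (s - d + 1) - 2 * q"
proof -
  have "d * d < d * (s + 2)" using d s by (intro mult_strict_left_mono) auto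
  then have "(s + d) / (2 * d) < min 1 ((s + 1) / d)"
    using d s by (auto simp: field_simps)
  then obtain p where p: "(s + d) / (2 * d) < p" "p < min 1 ((s + 1) / d)" using dense by blast
  show ?thesis
  proof (rule that[of p "s + 1 - d * p"])
    show "0 \<le> p" using p(1) d s by (smt (verit) divide_nonneg_pos)
    show "p < 1" using p(2) by simp
    show "0 \<le> s + 1 - d * p" using p(2) d by (simp add: field_simps)
    show "-1 < (s - d + 1) - 2 * (s + 1 - d * p)" using p(1) d by (simp add: field_simps)
  qed simp
qed

lemma slab_energy_tendsto_zero:
  fixes C :: "'a::euclidean_space multiset" and \<mu> :: "'a \<Rightarrow> real"
    and Cs :: "nat \<Rightarrow> 'a multiset" and \<mu>s :: "nat \<Rightarrow> 'a \<Rightarrow> real"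
  assumes dk: "decreasing_kernel lg s" and s: "real DIM('a) - 2 < s" "s < real DIM('a)"
    and R: "0 < R" and \<eta>: "0 < \<eta>"
    and weak: "mset_weak_conv (cube R) Cs C"
    and Linf: "\<And>\<epsilon>. 0 < \<epsilon> \<Longrightarrow>
      eventually (\<lambda>n. AE x in lebesgue. x \<in> cube R \<longrightarrow> \<bar>\<mu>s n x - \<mu> x\<bar> \<le> \<epsilon>) sequentially"
  shows "(\<lambda>n. \<integral>\<^sup>+ X. indicator (cube R \<times> {-R..R}) X * ennreal (\<bar>snd X\<bar> powr (s - real DIM('a) + 1)
    * (norm (Efield lg s R \<eta> (\<lambda>x. (x, 0::real)) C (Cs n) \<mu> (\<mu>s n) X))\<^sup>2) \<partial>lebesgue) \<longlonglongrightarrow> 0"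
proof -
  define \<gamma> where "\<gamma> = s - real DIM('a) + 1"
  obtain p q where p: "0 \<le> p" "p < 1" and q: "0 \<le> q" "q + real DIM('a) * p = s + 1"
    and \<gamma>q: "-1 < \<gamma> - 2 * q"
    using exists_splitting_exponents[of "real DIM('a)" s] decreasing_kernel_nonneg[OF dk] s
    unfolding \<gamma>_def by auto
  have "-1 < - p" "0 \<le> R" using p R by auto
  then obtain I where I: "0 \<le> I" "(\<integral>\<^sup>+ t. indicator {-R..R} t * ennreal (\<bar>t::real\<bar> powr - p) \<partial>lborel) = ennreal I"
    by (rule nn_integral_abs_powr_interval)
  define c where "c = kernel_grad_const lg s * I ^ DIM('a)"
  have c: "0 \<le> c" using kernel_grad_const_nonneg[OF dk] I(1) by (simp add: c_def)
  define \<Phi> where "\<Phi> X = c * \<bar>snd X\<bar> powr (- q)" for X :: "'a \<times> real"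
  have "(\<lambda>n. \<integral>\<^sup>+ X. indicator (cube R \<times> {-R..R}) X * ennreal (\<bar>snd X\<bar> powr \<gamma>
      * (norm (Efield lg s R \<eta> (\<lambda>x. (x, 0::real)) C (Cs n) \<mu> (\<mu>s n) X))\<^sup>2) \<partial>lebesgue) \<longlonglongrightarrow> 0"
  proof (rule weighted_energy_tendsto_zero[where \<Phi>=\<Phi>, OF dk \<eta>])
    have "(\<integral>\<^sup>+ X. indicator (cube R \<times> {-R..R}) X * ennreal (1 * \<bar>snd X\<bar> powr \<gamma>)
        \<partial>(lborel :: ('a \<times> real) measure)) < \<infinity>"
      using \<gamma>q q R by (intro nn_integral_slab_abs_powr_finite) auto
    then show "(\<integral>\<^sup>+ X. indicator (cube R \<times> {-R..R}) X * ennreal (\<bar>snd X\<bar> powr \<gamma>)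
        \<partial>(lborel :: ('a \<times> real) measure)) < \<infinity>"
      by simp
    have "\<bar>snd X\<bar> powr \<gamma> * (\<Phi> X)\<^sup>2 = c\<^sup>2 * \<bar>snd X\<bar> powr (\<gamma> - 2 * q)" for X :: "'a \<times> real"
    proof (cases "snd X = 0")
      case False
      have "\<gamma> - 2 * q = \<gamma> + (- q + - q)" by simp
      then have "\<bar>snd X\<bar> powr (\<gamma> - 2 * q) = \<bar>snd X\<bar> powr \<gamma> * (\<bar>snd X\<bar> powr (- q))\<^sup>2"
        by (simp only: powr_add power2_eq_square)
      then show ?thesis by (simp add: \<Phi>_def power_mult_distrib)
    qed (simp add: \<Phi>_def)
    then show "(\<integral>\<^sup>+ X. indicator (cube R \<times> {-R..R}) X * ennreal (\<bar>snd X\<bar> powr \<gamma> * (\<Phi> X)\<^sup>2) \<partial>lborel) < \<infinity>"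
      using nn_integral_slab_abs_powr_finite[of "\<gamma> - 2 * q" R "c\<^sup>2", where 'a='a] \<gamma>q R by simp
    show "AE X in lborel. X \<in> cube R \<times> {-R..R} \<longrightarrow> (\<integral>\<^sup>+ x. indicator (cube R) x
        * ennreal (norm (vgrad (gker lg s) (X - (x, 0)))) \<partial>lebesgue) \<le> ennreal (\<Phi> X)"
      using AE_snd_nonzero[where 'a='a]
    proof (eventually_elim, intro impI)
      fix X :: "'a \<times> real" assume "snd X \<noteq> 0" "X \<in> cube R \<times> {-R..R}"
      moreover obtain X1 y where X: "X = (X1, y)" by (cases X)
      ultimately have X1: "X1 \<in> cube R" and y: "y \<noteq> 0" by auto
      have "(\<integral>\<^sup>+ x. indicator (cube R) x * ennreal (norm (vgrad (gker lg s) (X - (x, 0)))) \<partial>lebesgue)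
          \<le> ennreal ((kernel_grad_const lg s * \<bar>y\<bar> powr (- q)) * I ^ DIM('a))"
      proof (rule nn_integral_cube_le_prod_abs_powr[OF X1 _ _ I(2,1)])
        show "0 \<le> kernel_grad_const lg s * \<bar>y\<bar> powr (- q)" using kernel_grad_const_nonneg[OF dk] by simp
        fix x assume nz: "\<forall>b\<in>Basis. (X1 - x) \<bullet> b \<noteq> 0"
        define r where "r = norm (X - (x, 0))"
        have Z: "X - (x, 0) = (X1 - x, y)" using X by simp
        then have "0 < r" using y by (simp add: r_def zero_prod_def)
        have "\<bar>y\<bar> \<le> r" unfolding r_def Z using norm_snd_le[of y "X1 - x"] by simp
        have "norm (X1 - x) \<le> r" unfolding r_def Z by (rule norm_fst_le)
        have "- (s + 1) = - q + - (real DIM('a) * p)" using q(2) by linarith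
        then have "r powr (- (s + 1)) = r powr (- q) * r powr (- (real DIM('a) * p))"
          by (simp only: powr_add)
        also have "\<dots> \<le> \<bar>y\<bar> powr (- q) * (\<Prod>b\<in>Basis. \<bar>(X1 - x) \<bullet> b\<bar> powr (- p))"
          using \<open>\<bar>y\<bar> \<le> r\<close> \<open>norm (X1 - x) \<le> r\<close> y q(1) p(1) nz
          by (intro mult_mono powr_mono2' powr_le_prod_abs_inner_powr) (auto intro: prod_nonneg)
        finally show "norm (vgrad (gker lg s) (X - (x, 0)))
            \<le> kernel_grad_const lg s * \<bar>y\<bar> powr (- q) * (\<Prod>b\<in>Basis. \<bar>(X1 - x) \<bullet> b\<bar> powr (- p))"
          using \<open>0 < r\<close> kernel_grad_const_nonneg[OF dk]
          by (simp add: r_def vgrad_gker norm_kernel_grad[OF dk] mult.assoc mult_left_mono)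
      qed
      then show "(\<integral>\<^sup>+ x. indicator (cube R) x * ennreal (norm (vgrad (gker lg s) (X - (x, 0)))) \<partial>lebesgue)
          \<le> ennreal (\<Phi> X)"
        by (simp add: \<Phi>_def c_def X mult_ac)
    qed
    show "continuous_on UNIV (\<lambda>x::'a. (x, 0::real))" by (intro continuous_intros)
    show "cube R \<times> {-R..R} \<in> sets (borel :: ('a \<times> real) measure)"
      by (intro borel_closed closed_Times) (auto simp: cube_def)
    show "\<Phi> \<in> borel_measurable borel" unfolding \<Phi>_def[abs_def] by measurable
    show "0 \<le> \<Phi> X" for X using c by (simp add: \<Phi>_def)
  qed (simp_all add: weak Linf)
  then show ?thesis by (simp add: \<gamma>_def)
qed


lemma admissible_decreasing_kernel:
  assumes "admissible d lg s"
  shows "decreasing_kernel lg s"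
proof (cases lg)
  case True
  then show ?thesis using assms unfolding admissible_def decreasing_kernel_def if_P[OF True] by blast
next
  case False
  have "(max 0 (real d - 2) < s \<and> s < real d) \<or> (3 \<le> d \<and> s = real d - 2)"
    using assms unfolding admissible_def if_not_P[OF False] .
  then have "0 < s" by (auto simp: max_less_iff_conj)
  then show ?thesis unfolding decreasing_kernel_def if_not_P[OF False] .
qed

lemma admissible_kdim_one:
  assumes adm: "admissible d lg s" and k: "kdim d lg s = 1"
  shows "real d - 2 < s \<and> s < real d \<and> gam d lg s = s - real d + 1"
proof (cases lg)
  case True
  have "d = 1" using k unfolding kdim_def if_P[OF True] by (cases "d = 1") auto
  moreover have "s = 0" using adm unfolding admissible_def if_P[OF True] by blast
  ultimately show ?thesis unfolding gam_def if_P[OF True] by simp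
next
  case False
  have s: "max 0 (real d - 2) < s"
    using k unfolding kdim_def if_not_P[OF False] by (cases "max 0 (real d - 2) < s") auto
  have "(max 0 (real d - 2) < s \<and> s < real d) \<or> (3 \<le> d \<and> s = real d - 2)"
    using adm unfolding admissible_def if_not_P[OF False] .
  then have "s < real d" using s by linarith
  then show ?thesis using s unfolding gam_def if_not_P[OF False] if_P[OF s] by linarith
qed

lemma admissible_kdim_zero:
  assumes adm: "admissible d lg s" and k: "kdim d lg s \<noteq> 1"
  shows "s + 1 < real d"
proof (cases lg)
  case True
  have "d \<noteq> 1" using k unfolding kdim_def if_P[OF True] by (cases "d = 1") auto
  moreover have "(d = 1 \<or> d = 2) \<and> s = 0" using adm unfolding admissible_def if_P[OF True] .
  ultimately show ?thesis by auto
next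
  case False
  have s: "\<not> max 0 (real d - 2) < s"
    using k unfolding kdim_def if_not_P[OF False] by (cases "max 0 (real d - 2) < s") auto
  have "(max 0 (real d - 2) < s \<and> s < real d) \<or> (3 \<le> d \<and> s = real d - 2)"
    using adm unfolding admissible_def if_not_P[OF False] .
  then have "s = real d - 2" using s by blast
  then show ?thesis by simp
qed

theorem mainTheorem16:
  fixes lg :: bool and s R \<eta> :: real
    and C :: "'a::euclidean_space multiset" and \<mu> :: "'a \<Rightarrow> real"
    and Cs :: "nat \<Rightarrow> 'a multiset" and \<mu>s :: "nat \<Rightarrow> 'a \<Rightarrow> real"
  assumes adm: "admissible DIM('a) lg s"
    and R: "R > 0"
    and C: "set_mset C \<subseteq> cube R"
    and \<mu>meas: "set_borel_measurable lebesgue (cube R) \<mu>"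
    and \<mu>bdd: "bounded (\<mu> ` cube R)"
    and Cs: "\<And>n. set_mset (Cs n) \<subseteq> cube R"
    and \<mu>smeas: "\<And>n. set_borel_measurable lebesgue (cube R) (\<mu>s n)"
    and \<mu>sbdd: "\<And>n. bounded (\<mu>s n ` cube R)"
    and weak: "\<And>\<phi> :: 'a \<Rightarrow> real. continuous_on (cube R) \<phi> \<Longrightarrow>
                 (\<lambda>n. \<Sum>p\<in>#Cs n. \<phi> p) \<longlonglongrightarrow> (\<Sum>p\<in>#C. \<phi> p)"
    and Linf: "\<And>e. e > 0 \<Longrightarrow>
                 eventually (\<lambda>n. AE x in lebesgue. x \<in> cube R \<longrightarrow> \<bar>\<mu>s n x - \<mu> x\<bar> \<le> e) sequentially"
    and eta: "0 < \<eta>" "\<eta> < 1"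
  shows "(\<lambda>n. energy lg s R \<eta> C (Cs n) \<mu> (\<mu>s n)) \<longlonglongrightarrow> 0"
proof -
  have dk: "decreasing_kernel lg s" using adm by (rule admissible_decreasing_kernel)
  have weak_conv: "mset_weak_conv (cube R) Cs C" using weak by (simp add: mset_weak_conv_def)
  show ?thesis
  proof (cases "kdim DIM('a) lg s = 1")
    case True
    then have s: "real DIM('a) - 2 < s" "s < real DIM('a)" "gam DIM('a) lg s = s - real DIM('a) + 1"
      using admissible_kdim_one[OF adm] by auto
    show ?thesis
      unfolding energy_def if_P[OF True] s(3)
      by (rule slab_energy_tendsto_zero[OF dk s(1,2) R eta(1) weak_conv Linf])
  next
    case False
    show ?thesis
      unfolding energy_def if_not_P[OF False]
      by (rule cube_energy_tendsto_zero[OF dk admissible_kdim_zero[OF adm False] R eta(1) weak_conv Linf])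
  qed
qed

end
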